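(* Let $n,k,s$ be positive integers with $2\le s\le\lfloor n/k\rfloor$, write $n=ds+s_0$ with $d=\lfloor n/s\rfloor$ and $s_0\le\min\{s,d\}$, and let $\gamma_{cc}(n,k,s)$ be the repair bandwidth of the Cubic Code for the Fixed Cluster Repair System with these parameters storing a file of size $M$. Then $$\gamma_{cc}(n,k,s)\le\frac{M/d}{1-\left(1-\frac{k}{(s+1)d}\right)^{s+1}}.$$
   Context: FCRS: $n=ds+s_0$ servers in clusters $1,\dots,s$ of size $d$ and a cluster $s+1$ of size $s_0$; any $k$ servers recover the file; a failed server in cluster $r$ is repaired from all $d$ servers of some cluster $i\in[s]$, $i\neq r$. Cubic Code: the file is split into $m$ chunks of size $M/m$ and encoded with a $(d^{s+1},m)$ MDS code with symbols $C_b$ indexed by $b=b_{s+1}\cdots b_1$, $b_i\in[d]$; server $(i,j)$ stores $\{C_b:b_i=j\}$ and, to repair $(r,\ell)$ from cluster $i$, sends $\{C_b:b_i=j,b_r=\ell\}$; here $m=\min\{d^{s+1}-\prod_{i=1}^{s+1}(d-k_i):k_i\in\mathbb Z_{\ge0},\ \sum_i k_i=k,\ k_{s+1}\le s_0\}$, and $\gamma_{cc}(n,k,s)=Md^s/m$. *)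

theory Defs
  imports Complex_Main
begin

text \<open>Fixed Cluster Repair System parameters: clusters 1..s of size d and cluster s+1 of
size s0.\<close>

definition cubic_m :: "nat \<Rightarrow> nat \<Rightarrow> nat \<Rightarrow> nat \<Rightarrow> int" where
  "cubic_m d s s0 k = Min { int d ^ (s+1) - (\<Prod>i\<in>{1..s+1}. (int d - int (kv i))) | kv.
       (\<forall>i. i \<notin> {1..s+1} \<longrightarrow> kv i = 0) \<and> (\<Sum>i\<in>{1..s+1}. kv i) = k \<and> kv (s+1) \<le> s0 }"

definition gamma_cc :: "real \<Rightarrow> nat \<Rightarrow> nat \<Rightarrow> nat \<Rightarrow> real" where
  "gamma_cc M n k s = (let d = n div s; s0 = n - d * s in
      M * real d ^ s / real_of_int (cubic_m d s s0 k))"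

end

theory Submission
  imports Defs "HOL-Analysis.Convex"
begin

text \<open>Any distribution (k_1,...,k_{s+1}) of k servers over the clusters has
\<open>\<Sum> (d - k_i) = (s+1) d - k\<close>, so by AM-GM \<open>\<Prod> (d - k_i) \<le> (d - k/(s+1))^(s+1)\<close>.
Hence \<open>m \<ge> d^(s+1) (1 - (1 - k/((s+1)d))^(s+1))\<close>, and dividing \<open>M d^s\<close> by this bound
gives the claim.\<close>

lemma prod_le_mean_power:
  fixes x :: "'a \<Rightarrow> real"
  assumes "finite S" "S \<noteq> {}" and nonneg: "\<And>i. i \<in> S \<Longrightarrow> 0 \<le> x i"
  shows "(\<Prod>i\<in>S. x i) \<le> ((\<Sum>i\<in>S. x i) / card S) ^ card S"
proof -
  define P where "P = (\<Prod>i\<in>S. x i)"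
  define n where "n = card S"
  have n: "n > 0" using assms(1,2) unfolding n_def by (simp add: card_gt_0_iff)
  have P: "P \<ge> 0" unfolding P_def using nonneg by (simp add: prod_nonneg)
  have "P powr (1 / n) \<le> (\<Sum>i\<in>S. x i) / n"
    using arith_geom_mean[OF assms] unfolding P_def n_def by (simp add: sum_divide_distrib)
  hence "(P powr (1 / n)) ^ n \<le> ((\<Sum>i\<in>S. x i) / n) ^ n"
    by (rule power_mono) simp
  moreover have "(P powr (1 / n)) ^ n = P"
  proof (cases "P = 0")
    case False
    with P n have "(P powr (1 / n)) ^ n = P powr (1 / n * n)"
      by (simp add: powr_realpow[symmetric] powr_powr)
    with n P show ?thesis by simp
  qed (use n in simp)
  ultimately show ?thesis unfolding P_def n_def by simp
qed

lemma cubic_m_attained: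
  assumes "0 < s" "k \<le> d"
  obtains kv where "(\<Sum>i\<in>{1..s+1}. kv i) = k"
    and "cubic_m d s s0 k = int d ^ (s+1) - (\<Prod>i\<in>{1..s+1}. (int d - int (kv i)))"
proof -
  define val where "val kv = int d ^ (s+1) - (\<Prod>i\<in>{1..s+1}. (int d - int (kv i)))"
    for kv :: "nat \<Rightarrow> nat"
  define Adm where "Adm = {kv. (\<forall>i. i \<notin> {1..s+1} \<longrightarrow> kv i = 0)
    \<and> (\<Sum>i\<in>{1..s+1}. kv i) = k \<and> kv (s+1) \<le> s0}"
  have m: "cubic_m d s s0 k = Min (val ` Adm)"
    unfolding cubic_m_def val_def Adm_def by (simp add: setcompr_eq_image)
  have "val kv \<in> {0..int d ^ (s+1)}" if "kv \<in> Adm" for kv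
  proof -
    have le: "kv i \<le> d" if "i \<in> {1..s+1}" for i
      using member_le_sum[of i "{1..s+1}" kv] that \<open>kv \<in> Adm\<close> assms(2)
      unfolding Adm_def by simp
    have "0 \<le> (\<Prod>i\<in>{1..s+1}. (int d - int (kv i)))"
      by (rule prod_nonneg) (use le in auto)
    moreover have "(\<Prod>i\<in>{1..s+1}. (int d - int (kv i))) \<le> (\<Prod>i\<in>{1..s+1::nat}. int d)"
      by (rule prod_mono) (use le in auto)
    ultimately show ?thesis unfolding val_def by simp
  qed
  hence "finite (val ` Adm)" by (auto intro: finite_subset[of _ "{0..int d ^ (s+1)}"])
  moreover have "(\<lambda>i. if i = 1 then k else 0) \<in> Adm"
    unfolding Adm_def using assms(1) by simp
  ultimately have "Min (val ` Adm) \<in> val ` Adm" by (intro Min_in) auto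
  then obtain kv where "kv \<in> Adm" "cubic_m d s s0 k = val kv" using m by auto
  thus thesis using that unfolding Adm_def val_def by blast
qed

lemma cubic_m_lower_bound:
  assumes "0 < s" "k \<le> d"
  shows "real d ^ (s+1) - (real d - real k / real (s+1)) ^ (s+1) \<le> cubic_m d s s0 k"
proof -
  obtain kv where sum: "(\<Sum>i\<in>{1..s+1}. kv i) = k"
    and m: "cubic_m d s s0 k = int d ^ (s+1) - (\<Prod>i\<in>{1..s+1}. (int d - int (kv i)))"
    using cubic_m_attained[OF assms] .
  have "kv i \<le> d" if "i \<in> {1..s+1}" for i
    using member_le_sum[of i "{1..s+1}" kv] that sum assms(2) by simp
  hence "(\<Prod>i\<in>{1..s+1}. real d - real (kv i))
      \<le> ((\<Sum>i\<in>{1..s+1}. real d - real (kv i)) / real (s+1)) ^ (s+1)"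
    using prod_le_mean_power[of "{1..s+1}" "\<lambda>i. real d - real (kv i)"] by simp
  also have "(\<Sum>i\<in>{1..s+1}. real d - real (kv i)) = real (s+1) * real d - real k"
    using sum by (simp add: sum_subtractf flip: of_nat_sum)
  also have "(real (s+1) * real d - real k) / real (s+1) = real d - real k / real (s+1)"
    by (simp add: field_simps del: of_nat_Suc)
  finally show ?thesis using m by simp
qed

theorem corollary1:
  fixes n k s :: nat and M :: real
  assumes "0 < n" and "0 < k" and "0 < s"
    and "2 \<le> s" and "s \<le> n div k"
    and "n - (n div s) * s \<le> min s (n div s)"
    and "0 < M"
  shows "gamma_cc M n k s \<le>
    (M / real (n div s)) / (1 - (1 - real k / (real (s+1) * real (n div s))) ^ (s+1))"
proof -
  define d where "d = n div s"
  define x where "x = real k / (real (s+1) * real d)"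
  define m where "m = real_of_int (cubic_m d s (n - d * s) k)"
  have "s * k \<le> n" using assms(2,5) by (simp add: less_eq_div_iff_mult_less_eq)
  hence kd: "k \<le> d" unfolding d_def using assms(3) by (simp add: less_eq_div_iff_mult_less_eq mult.commute)
  hence d: "d > 0" using assms(2) by simp
  have "k \<le> (s+1) * d" using kd by (simp add: trans_le_add1)
  hence "real k \<le> real (s+1) * real d" by (metis of_nat_le_iff of_nat_mult)
  have "0 < x" "x \<le> 1" unfolding x_def using d \<open>real k \<le> real (s+1) * real d\<close> assms(2)
    by (auto simp: field_simps simp del: of_nat_Suc)
  hence D: "0 < 1 - (1 - x) ^ (s+1)" by (simp add: power_less_one_iff del: power_Suc)
  have "real d - real k / real (s+1) = real d * (1 - x)"
    unfolding x_def using d by (simp add: field_simps del: of_nat_Suc)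
  hence "(real d - real k / real (s+1)) ^ (s+1) = real d ^ (s+1) * (1 - x) ^ (s+1)"
    by (simp only: power_mult_distrib)
  hence bound: "real d ^ (s+1) * (1 - (1 - x) ^ (s+1)) \<le> m"
    using cubic_m_lower_bound[OF assms(3) kd, of "n - d * s"]
    unfolding m_def by (simp only: right_diff_distrib mult_1_right)
  have pos: "0 < real d ^ (s+1) * (1 - (1 - x) ^ (s+1))" using d D by simp
  have "0 < m * (real d ^ (s+1) * (1 - (1 - x) ^ (s+1)))"
    by (rule mult_pos_pos[OF order.strict_trans2[OF pos bound] pos])
  with bound have "M * real d ^ s / m \<le> M * real d ^ s / (real d ^ (s+1) * (1 - (1 - x) ^ (s+1)))"
    using assms(7) by (intro divide_left_mono) simp_all
  also have "\<dots> = (M / real d) / (1 - (1 - x) ^ (s+1))"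
    using d by (simp add: power_Suc mult.assoc del: power_Suc2)
  finally show ?thesis
    unfolding gamma_cc_def Let_def m_def x_def d_def .
qed

end
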